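(* Suppose $p_{XY}$ has full support on $\mathcal{X}\times\mathcal{Y}$. Then $(p_{XY},p_{Z|XY})$ is computable with perfect security if and only if for every $y,y'\in\mathcal{Y}$ the following hold: (1) $k(y)=k(y')=:k$ and $\{\vec\alpha_1^{(y)},\dots,\vec\alpha_k^{(y)}\}=\{\vec\alpha_1^{(y')},\dots,\vec\alpha_k^{(y')}\}$; and (2) after indexing the classes so that $\vec\alpha_i^{(y)}=\vec\alpha_i^{(y')}$ for every $i\in[k]$, one has for every $i\in[k]$ and every $x\in\mathcal{X}$: \[\sum_{z\in\mathcal{Z}_i^{(y)}}p_{Z|XY}(z|x,y)=\sum_{z\in\mathcal{Z}_i^{(y')}}p_{Z|XY}(z|x,y').\]
   Context: $\mathcal{X},\mathcal{Y},\mathcal{Z}$ are finite. $(p_{XY},p_{Z|XY})$ is computable with perfect security if there exists a joint p.m.f. $p(u,x,y,z)=p_{XY}(x,y)p_{Z|XY}(z|x,y)p(u|x,y,z)$ (with $U$ on a finite set) satisfying the Markov chains $U-X-Y$, $Z-(U,Y)-X$ and $U-(Y,Z)-X$. For $y\in\mathcal{Y}$ let $\mathcal{Z}^{(y)}=\{z\in\mathcal{Z}:\exists x,\ p_{Z|XY}(z|x,y)>0\}$. For $z,z'\in\mathcal{Z}^{(y)}$, write $z\equiv_y z'$ if the column vectors $(p_{Z|XY}(z|x,y))_{x\in\mathcal{X}}$ and $(p_{Z|XY}(z'|x,y))_{x\in\mathcal{X}}$ are positive scalar multiples of each other; this is an equivalence relation partitioning $\mathcal{Z}^{(y)}=\mathcal{Z}_1^{(y)}\uplus\cdots\uplus\mathcal{Z}_{k(y)}^{(y)}$.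 For each class, the matrix $A_i^{(y)}(x,z)=p_{Z|XY}(z|x,y)$, $(x,z)\in\mathcal{X}\times\mathcal{Z}_i^{(y)}$, is rank one and can be uniquely written as $A_i^{(y)}(x,z)=\vec\alpha_i^{(y)}(x)\vec\gamma_i^{(y)}(z)$ with $\vec\alpha_i^{(y)}$ a probability vector on $\mathcal{X}$. Distinct classes for the same $y$ have distinct $\vec\alpha$'s. *)

theory Defs
  imports Complex_Main
begin

definition prob_ev :: "('w \<Rightarrow> real) \<Rightarrow> 'w set \<Rightarrow> ('w \<Rightarrow> bool) \<Rightarrow> real" where
  "prob_ev P Om E = (\<Sum>w\<in>{w\<in>Om. E w}. P w)"

definition markov_chain ::
  "('w \<Rightarrow> real) \<Rightarrow> 'w set \<Rightarrow> ('w \<Rightarrow> 'a) \<Rightarrow> ('w \<Rightarrow> 'b) \<Rightarrow> ('w \<Rightarrow> 'c) \<Rightarrow> bool" where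
  "markov_chain P Om A B C \<longleftrightarrow>
     (\<forall>a b c. prob_ev P Om (\<lambda>w. A w = a \<and> B w = b \<and> C w = c) * prob_ev P Om (\<lambda>w. B w = b)
            = prob_ev P Om (\<lambda>w. A w = a \<and> B w = b) * prob_ev P Om (\<lambda>w. B w = b \<and> C w = c))"

text \<open>pXY x y = p_XY(x,y);  W x y z = p_{Z|XY}(z|x,y);  q u x y z = p(u|x,y,z).
  U takes values in a finite set Us of naturals.  Sample space elements are (u,x,y,z).\<close>
definition joint ::
  "('x \<Rightarrow> 'y \<Rightarrow> real) \<Rightarrow> ('x \<Rightarrow> 'y \<Rightarrow> 'z \<Rightarrow> real) \<Rightarrow> (nat \<Rightarrow> 'x \<Rightarrow> 'y \<Rightarrow> 'z \<Rightarrow> real)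
     \<Rightarrow> nat \<times> 'x \<times> 'y \<times> 'z \<Rightarrow> real" where
  "joint pXY W q = (\<lambda>(u,x,y,z). pXY x y * W x y z * q u x y z)"

definition perfectly_secure_computable ::
  "('x::finite \<Rightarrow> 'y::finite \<Rightarrow> real) \<Rightarrow> ('x \<Rightarrow> 'y \<Rightarrow> 'z::finite \<Rightarrow> real) \<Rightarrow> bool" where
  "perfectly_secure_computable pXY W \<longleftrightarrow>
     (\<exists>(Us::nat set) q. finite Us \<and>
        (\<forall>u x y z. 0 \<le> q u x y z) \<and> (\<forall>x y z. (\<Sum>u\<in>Us. q u x y z) = 1) \<and>
        (let P = joint pXY W q; Om = Us \<times> (UNIV :: ('x \<times> 'y \<times> 'z) set) in
           markov_chain P Om (\<lambda>(u,x,y,z). u) (\<lambda>(u,x,y,z). x) (\<lambda>(u,x,y,z). y) \<and>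
           markov_chain P Om (\<lambda>(u,x,y,z). z) (\<lambda>(u,x,y,z). (u,y)) (\<lambda>(u,x,y,z). x) \<and>
           markov_chain P Om (\<lambda>(u,x,y,z). u) (\<lambda>(u,x,y,z). (y,z)) (\<lambda>(u,x,y,z). x)))"

definition Zsupp :: "('x \<Rightarrow> 'y \<Rightarrow> 'z \<Rightarrow> real) \<Rightarrow> 'y \<Rightarrow> 'z set" where
  "Zsupp W y = {z. \<exists>x. W x y z > 0}"

definition zequiv :: "('x \<Rightarrow> 'y \<Rightarrow> 'z \<Rightarrow> real) \<Rightarrow> 'y \<Rightarrow> ('z \<times> 'z) set" where
  "zequiv W y = {(z, z'). z \<in> Zsupp W y \<and> z' \<in> Zsupp W y \<and>
                  (\<exists>c>0. \<forall>x. W x y z = c * W x y z')}"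

definition zclasses :: "('x \<Rightarrow> 'y \<Rightarrow> 'z \<Rightarrow> real) \<Rightarrow> 'y \<Rightarrow> 'z set set" where
  "zclasses W y = Zsupp W y // zequiv W y"

definition kcl :: "('x \<Rightarrow> 'y \<Rightarrow> 'z \<Rightarrow> real) \<Rightarrow> 'y \<Rightarrow> nat" where
  "kcl W y = card (zclasses W y)"

definition alpha :: "('x::finite \<Rightarrow> 'y \<Rightarrow> 'z \<Rightarrow> real) \<Rightarrow> 'y \<Rightarrow> 'z set \<Rightarrow> ('x \<Rightarrow> real)" where
  "alpha W y C = (THE a. (\<forall>x. 0 \<le> a x) \<and> (\<Sum>x\<in>UNIV. a x) = 1 \<and>
                         (\<exists>g. \<forall>x. \<forall>z\<in>C. W x y z = a x * g z))"

end

theory Submission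
  imports Defs
begin

text \<open>Normalising the column of z for fixed y gives the vector \<open>\<alpha>\<close> of its class, and the class
  condition says exactly that the per-class column sums \<open>class_mass W y \<alpha> x\<close> do not depend on y.
  Necessity: U - X - Y makes p(u | x, y) independent of y, and the two Markov chains
  Z - (U,Y) - X and U - (Y,Z) - X force every z compatible with (u, y) to have a column proportional
  to p(u | \<cdot>, y); so U determines the class of Z, and summing p(z, u | x, y) over a class yields a
  sum of terms p(u | x) that does not involve y.  Sufficiency: let U be a label of the class of Z;
  then the joint distribution factorises as each of the three Markov chains requires.\<close>

section \<open>Normalised columns and their classes\<close>

text \<open>A zero vector is normalised to itself (as \<open>x / 0 = 0\<close>), so
  \<open>column_eq_normalized_mult_sum\<close> below holds also for z outside the support.\<close>

definition normalized :: "('x::finite \<Rightarrow> real) \<Rightarrow> 'x \<Rightarrow> real" where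
  "normalized f = (\<lambda>x. f x / sum f UNIV)"

lemma normalized_scale:
  fixes f g :: "'x::finite \<Rightarrow> real"
  assumes "\<And>x. f x = c * g x" and "c \<noteq> 0"
  shows "normalized f = normalized g"
proof -
  have "sum f UNIV = c * sum g UNIV"
    using assms(1) by (simp add: sum_distrib_left)
  then show ?thesis
    using assms by (auto simp: normalized_def fun_eq_iff)
qed

lemma normalized_mult_sum:
  fixes f :: "'x::finite \<Rightarrow> real"
  assumes "\<And>x. 0 \<le> f x"
  shows "f x = normalized f x * sum f UNIV"
proof (cases "sum f UNIV = 0")
  case True
  then show ?thesis
    using assms by (simp add: sum_nonneg_eq_0_iff)
qed (simp add: normalized_def)

lemma normalized_prob_vector:
  fixes f :: "'x::finite \<Rightarrow> real"
  assumes "\<And>x. 0 \<le> f x" and "0 < sum f UNIV"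
  shows "(\<forall>x. 0 \<le> normalized f x) \<and> sum (normalized f) UNIV = 1"
  using assms by (simp add: normalized_def sum_divide_distrib[symmetric])

text \<open>In the notation of the paper, \<open>column_profiles W y\<close> is the set of vectors \<open>\<alpha>_i^(y)\<close>,
  \<open>column_class W y \<alpha>_i^(y)\<close> is the class \<open>Z_i^(y)\<close>, and \<open>class_mass W y \<alpha>_i^(y) x\<close> is the sum of
  \<open>p(z | x, y)\<close> over that class.\<close>

definition column_profiles :: "('x::finite \<Rightarrow> 'y \<Rightarrow> 'z \<Rightarrow> real) \<Rightarrow> 'y \<Rightarrow> ('x \<Rightarrow> real) set" where
  "column_profiles W y = (\<lambda>z. normalized (\<lambda>x. W x y z)) ` Zsupp W y"

definition column_class :: "('x::finite \<Rightarrow> 'y \<Rightarrow> 'z \<Rightarrow> real) \<Rightarrow> 'y \<Rightarrow> ('x \<Rightarrow> real) \<Rightarrow> 'z set" where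
  "column_class W y a = {z \<in> Zsupp W y. normalized (\<lambda>x. W x y z) = a}"

definition class_mass :: "('x::finite \<Rightarrow> 'y \<Rightarrow> 'z \<Rightarrow> real) \<Rightarrow> 'y \<Rightarrow> ('x \<Rightarrow> real) \<Rightarrow> 'x \<Rightarrow> real" where
  "class_mass W y a x = (\<Sum>z\<in>column_class W y a. W x y z)"

context
  fixes W :: "'x::finite \<Rightarrow> 'y \<Rightarrow> 'z::finite \<Rightarrow> real"
  assumes W_nonneg: "\<And>x y z. 0 \<le> W x y z"
begin

lemma Zsupp_iff_column_sum_pos: "z \<in> Zsupp W y \<longleftrightarrow> 0 < (\<Sum>x\<in>UNIV. W x y z)"
proof
  assume "z \<in> Zsupp W y"
  then obtain x where "0 < W x y z"
    by (auto simp: Zsupp_def)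
  then show "0 < (\<Sum>x\<in>UNIV. W x y z)"
    using W_nonneg by (intro sum_pos2) auto
next
  assume pos: "0 < (\<Sum>x\<in>UNIV. W x y z)"
  show "z \<in> Zsupp W y"
  proof (rule ccontr)
    assume "z \<notin> Zsupp W y"
    then have "(\<Sum>x\<in>UNIV. W x y z) \<le> 0"
      by (intro sum_nonpos) (auto simp: Zsupp_def not_less)
    with pos show False
      by simp
  qed
qed

lemma W_eq_0_outside_Zsupp:
  assumes "z \<notin> Zsupp W y"
  shows "W x y z = 0"
proof -
  have "\<not> 0 < W x y z"
    using assms by (auto simp: Zsupp_def)
  with W_nonneg[of x y z] show ?thesis
    by simp
qed

lemma column_eq_normalized_mult_sum: "W x y z = normalized (\<lambda>x. W x y z) x * (\<Sum>x\<in>UNIV. W x y z)"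
  using normalized_mult_sum[of "\<lambda>x. W x y z"] W_nonneg by blast

lemma zequiv_iff_normalized_eq:
  assumes "z \<in> Zsupp W y" and "z' \<in> Zsupp W y"
  shows "(z, z') \<in> zequiv W y \<longleftrightarrow> normalized (\<lambda>x. W x y z) = normalized (\<lambda>x. W x y z')"
proof
  assume "(z, z') \<in> zequiv W y"
  then obtain c where "c > 0" "\<forall>x. W x y z = c * W x y z'"
    by (auto simp: zequiv_def)
  then show "normalized (\<lambda>x. W x y z) = normalized (\<lambda>x. W x y z')"
    by (intro normalized_scale) auto
next
  assume eq: "normalized (\<lambda>x. W x y z) = normalized (\<lambda>x. W x y z')"
  define s s' where "s = (\<Sum>x\<in>UNIV. W x y z)" and "s' = (\<Sum>x\<in>UNIV. W x y z')"
  have "s > 0" "s' > 0"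
    using assms by (simp_all add: s_def s'_def Zsupp_iff_column_sum_pos)
  moreover have "W x y z = (s / s') * W x y z'" for x
    using column_eq_normalized_mult_sum[of x y z] column_eq_normalized_mult_sum[of x y z']
      eq \<open>s' > 0\<close>
    by (simp add: s_def s'_def fun_eq_iff)
  ultimately show "(z, z') \<in> zequiv W y"
    using assms unfolding zequiv_def by (auto intro!: exI[of _ "s / s'"])
qed

lemma zclasses_eq_column_classes: "zclasses W y = column_class W y ` column_profiles W y"
proof -
  have "zequiv W y `` {z} = column_class W y (normalized (\<lambda>x. W x y z))" if z: "z \<in> Zsupp W y" for z
  proof (intro set_eqI)
    fix z'
    show "z' \<in> zequiv W y `` {z} \<longleftrightarrow> z' \<in> column_class W y (normalized (\<lambda>x. W x y z))"
    proof (cases "z' \<in> Zsupp W y")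
      case True
      then show ?thesis
        using zequiv_iff_normalized_eq[OF z True] by (auto simp: column_class_def)
    qed (auto simp: column_class_def zequiv_def)
  qed
  then show ?thesis
    by (auto simp: zclasses_def quotient_def column_profiles_def)
qed

lemma alpha_column_class:
  assumes "a \<in> column_profiles W y"
  shows "alpha W y (column_class W y a) = a"
  unfolding alpha_def
proof (rule the_equality)
  obtain z where z: "z \<in> Zsupp W y" and a: "a = normalized (\<lambda>x. W x y z)"
    using assms by (auto simp: column_profiles_def)
  have "(\<forall>x. 0 \<le> a x) \<and> sum a UNIV = 1"
    using normalized_prob_vector[of "\<lambda>x. W x y z"] W_nonneg z a
    by (simp add: Zsupp_iff_column_sum_pos)
  moreover have "\<exists>g. \<forall>x. \<forall>z'\<in>column_class W y a. W x y z' = a x * g z'"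
  proof (intro exI[of _ "\<lambda>z'. \<Sum>x\<in>UNIV. W x y z'"] allI ballI)
    fix x z' assume "z' \<in> column_class W y a"
    then have "normalized (\<lambda>x. W x y z') = a"
      by (simp add: column_class_def)
    with column_eq_normalized_mult_sum[of x y z'] show "W x y z' = a x * (\<Sum>x\<in>UNIV. W x y z')"
      by metis
  qed
  ultimately show "(\<forall>x. 0 \<le> a x) \<and> sum a UNIV = 1 \<and>
      (\<exists>g. \<forall>x. \<forall>z\<in>column_class W y a. W x y z = a x * g z)"
    by blast
next
  fix b assume b: "(\<forall>x. 0 \<le> b x) \<and> sum b UNIV = 1 \<and>
    (\<exists>g. \<forall>x. \<forall>z\<in>column_class W y a. W x y z = b x * g z)"
  obtain z where z: "z \<in> column_class W y a"
    using assms by (auto simp: column_profiles_def column_class_def)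
  obtain g where g: "\<And>x. W x y z = b x * g z"
    using b z by blast
  have "(\<Sum>x\<in>UNIV. W x y z) = g z"
    using b by (simp add: g sum_distrib_right[symmetric])
  moreover have "0 < (\<Sum>x\<in>UNIV. W x y z)"
    using z by (simp add: column_class_def Zsupp_iff_column_sum_pos)
  ultimately show "b = a"
    using z g by (auto simp: column_class_def normalized_def fun_eq_iff)
qed

lemma alpha_image_zclasses: "alpha W y ` zclasses W y = column_profiles W y"
  using alpha_column_class by (simp add: zclasses_eq_column_classes image_image)

lemma kcl_eq_card_column_profiles: "kcl W y = card (column_profiles W y)"
proof -
  have "inj_on (column_class W y) (column_profiles W y)"
    by (rule inj_on_inverseI[where g = "alpha W y"]) (rule alpha_column_class)
  then show ?thesis
    by (simp add: kcl_def zclasses_eq_column_classes card_image)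
qed

lemma class_mass_eq_sum_if:
  "class_mass W y a x = (\<Sum>z\<in>UNIV. if normalized (\<lambda>x. W x y z) = a then W x y z else 0)"
proof -
  have "class_mass W y a x = (\<Sum>z\<in>UNIV. if z \<in> column_class W y a then W x y z else 0)"
    by (simp add: class_mass_def sum.inter_restrict[symmetric])
  also have "\<dots> = (\<Sum>z\<in>UNIV. if normalized (\<lambda>x. W x y z) = a then W x y z else 0)"
    by (rule sum.cong) (auto simp: column_class_def W_eq_0_outside_Zsupp)
  finally show ?thesis .
qed

lemma column_profiles_eq_class_mass_support: "column_profiles W y = {a. \<exists>x. class_mass W y a x \<noteq> 0}"
proof (intro set_eqI iffI)
  fix a assume "a \<in> column_profiles W y"
  then obtain z where z: "z \<in> column_class W y a"
    by (auto simp: column_profiles_def column_class_def)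
  then obtain x where "0 < W x y z"
    by (auto simp: column_class_def Zsupp_def)
  moreover have "W x y z \<le> class_mass W y a x"
    unfolding class_mass_def using z W_nonneg by (intro member_le_sum) auto
  ultimately have "class_mass W y a x \<noteq> 0"
    by linarith
  then show "a \<in> {a. \<exists>x. class_mass W y a x \<noteq> 0}"
    by blast
next
  fix a assume "a \<in> {a. \<exists>x. class_mass W y a x \<noteq> 0}"
  then have "column_class W y a \<noteq> {}"
    by (auto simp: class_mass_def)
  then show "a \<in> column_profiles W y"
    by (auto simp: column_profiles_def column_class_def)
qed

lemma class_conditions_iff_class_mass_const:
  "(\<forall>y y'. kcl W y = kcl W y' \<and>
            alpha W y ` zclasses W y = alpha W y' ` zclasses W y' \<and>
            (\<forall>C\<in>zclasses W y. \<forall>C'\<in>zclasses W y'. alpha W y C = alpha W y' C' \<longrightarrow>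
               (\<forall>x. (\<Sum>z\<in>C. W x y z) = (\<Sum>z\<in>C'. W x y' z))))
   \<longleftrightarrow> (\<forall>y y'. class_mass W y = class_mass W y')" (is "?classes \<longleftrightarrow> ?mass")
proof
  assume classes: ?classes
  show ?mass
  proof (intro allI ext)
    fix y y' a x
    have profiles: "column_profiles W y = column_profiles W y'"
      using classes by (simp add: alpha_image_zclasses)
    show "class_mass W y a x = class_mass W y' a x"
    proof (cases "a \<in> column_profiles W y")
      case True
      then have "column_class W y a \<in> zclasses W y" "column_class W y' a \<in> zclasses W y'"
        and "alpha W y (column_class W y a) = alpha W y' (column_class W y' a)"
        using profiles by (simp_all add: zclasses_eq_column_classes alpha_column_class)
      then show ?thesis
        using classes unfolding class_mass_def by blast
    next
      case False
      then show ?thesis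
        using profiles by (auto simp: column_profiles_eq_class_mass_support)
    qed
  qed
next
  assume mass: ?mass
  have profiles: "column_profiles W y = column_profiles W y'" for y y'
    by (simp add: column_profiles_eq_class_mass_support mass[rule_format, of y y'])
  show ?classes
  proof (intro allI conjI ballI impI)
    fix y y'
    show "kcl W y = kcl W y'" "alpha W y ` zclasses W y = alpha W y' ` zclasses W y'"
      using profiles[of y y'] by (simp_all add: kcl_eq_card_column_profiles alpha_image_zclasses)
    fix C C' x
    assume "C \<in> zclasses W y" "C' \<in> zclasses W y'" "alpha W y C = alpha W y' C'"
    then obtain a where "C = column_class W y a" "C' = column_class W y' a"
      by (auto simp: zclasses_eq_column_classes alpha_column_class)
    moreover have "class_mass W y a x = class_mass W y' a x"
      using mass[rule_format, of y y'] by simp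
    ultimately show "(\<Sum>z\<in>C. W x y z) = (\<Sum>z\<in>C'. W x y' z)"
      by (simp add: class_mass_def)
  qed
qed

end

section \<open>Markov chains of the joint distribution\<close>

lemma prob_ev_expand:
  fixes F :: "nat \<Rightarrow> 'x::finite \<Rightarrow> 'y::finite \<Rightarrow> 'z::finite \<Rightarrow> real"
  assumes "finite Us"
  shows "prob_ev (\<lambda>(u,x,y,z). F u x y z) (Us \<times> UNIV) E =
     (\<Sum>u\<in>Us. \<Sum>x\<in>UNIV. \<Sum>y\<in>UNIV. \<Sum>z\<in>UNIV. if E (u,x,y,z) then F u x y z else 0)"
proof -
  have "prob_ev (\<lambda>(u,x,y,z). F u x y z) (Us \<times> UNIV) E
      = (\<Sum>(u,x,y,z)\<in>Us \<times> UNIV \<times> UNIV \<times> UNIV. if E (u,x,y,z) then F u x y z else 0)"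
    unfolding prob_ev_def using assms by (simp add: sum.inter_filter case_prod_unfold)
  then show ?thesis
    by (simp add: sum.cartesian_product)
qed

lemma sum_if_const_cond: "(\<Sum>x\<in>A. if P then f x else 0) = (if P then sum f A else 0)"
  by simp

lemma markov_chain_U_X_Y_iff:
  fixes F :: "nat \<Rightarrow> 'x::finite \<Rightarrow> 'y::finite \<Rightarrow> 'z::finite \<Rightarrow> real"
  assumes "finite Us"
  shows "markov_chain (\<lambda>(u,x,y,z). F u x y z) (Us \<times> UNIV)
           (\<lambda>(u,x,y,z). u) (\<lambda>(u,x,y,z). x) (\<lambda>(u,x,y,z). y) \<longleftrightarrow>
   (\<forall>u\<in>Us. \<forall>x y. (\<Sum>z\<in>UNIV. F u x y z) * (\<Sum>u'\<in>Us. \<Sum>y'\<in>UNIV. \<Sum>z\<in>UNIV. F u' x y' z)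
      = (\<Sum>y'\<in>UNIV. \<Sum>z\<in>UNIV. F u x y' z) * (\<Sum>u'\<in>Us. \<Sum>z\<in>UNIV. F u' x y z))"
  unfolding markov_chain_def prob_ev_expand[OF assms]
  using assms
  by (simp add: if_if_eq_conj[symmetric] sum_if_const_cond sum.delta sum.delta'
      cong del: if_weak_cong)
    blast

lemma markov_chain_Z_UY_X_iff:
  fixes F :: "nat \<Rightarrow> 'x::finite \<Rightarrow> 'y::finite \<Rightarrow> 'z::finite \<Rightarrow> real"
  assumes "finite Us"
  shows "markov_chain (\<lambda>(u,x,y,z). F u x y z) (Us \<times> UNIV)
           (\<lambda>(u,x,y,z). z) (\<lambda>(u,x,y,z). (u,y)) (\<lambda>(u,x,y,z). x) \<longleftrightarrow>
   (\<forall>u\<in>Us. \<forall>x y z. F u x y z * (\<Sum>x'\<in>UNIV. \<Sum>z'\<in>UNIV. F u x' y z')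
      = (\<Sum>x'\<in>UNIV. F u x' y z) * (\<Sum>z'\<in>UNIV. F u x y z'))"
  unfolding markov_chain_def prob_ev_expand[OF assms]
  using assms
  by (simp add: if_if_eq_conj[symmetric] sum_if_const_cond sum.delta sum.delta'
      cong del: if_weak_cong)
    blast

lemma markov_chain_U_YZ_X_iff:
  fixes F :: "nat \<Rightarrow> 'x::finite \<Rightarrow> 'y::finite \<Rightarrow> 'z::finite \<Rightarrow> real"
  assumes "finite Us"
  shows "markov_chain (\<lambda>(u,x,y,z). F u x y z) (Us \<times> UNIV)
           (\<lambda>(u,x,y,z). u) (\<lambda>(u,x,y,z). (y,z)) (\<lambda>(u,x,y,z). x) \<longleftrightarrow>
   (\<forall>u\<in>Us. \<forall>x y z. F u x y z * (\<Sum>u'\<in>Us. \<Sum>x'\<in>UNIV. F u' x' y z)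
      = (\<Sum>x'\<in>UNIV. F u x' y z) * (\<Sum>u'\<in>Us. F u' x y z))"
  unfolding markov_chain_def prob_ev_expand[OF assms]
  using assms
  by (simp add: if_if_eq_conj[symmetric] sum_if_const_cond sum.delta sum.delta'
      cong del: if_weak_cong)
    blast

lemma markov_chain_U_X_Y_if_factorizes:
  fixes F :: "nat \<Rightarrow> 'x::finite \<Rightarrow> 'y::finite \<Rightarrow> 'z::finite \<Rightarrow> real"
  assumes "finite Us" and factors: "\<And>u x y. u \<in> Us \<Longrightarrow> (\<Sum>z\<in>UNIV. F u x y z) = A u x * B x y"
  shows "markov_chain (\<lambda>(u,x,y,z). F u x y z) (Us \<times> UNIV)
           (\<lambda>(u,x,y,z). u) (\<lambda>(u,x,y,z). x) (\<lambda>(u,x,y,z). y)"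
  unfolding markov_chain_U_X_Y_iff[OF assms(1)]
  by (simp add: factors sum_product[symmetric]
      sum_distrib_left[symmetric] sum_distrib_right[symmetric])

lemma markov_chain_Z_UY_X_if_factorizes:
  fixes F :: "nat \<Rightarrow> 'x::finite \<Rightarrow> 'y::finite \<Rightarrow> 'z::finite \<Rightarrow> real"
  assumes "finite Us" and factors: "\<And>u x y z. u \<in> Us \<Longrightarrow> F u x y z = A u x y * B u y z"
  shows "markov_chain (\<lambda>(u,x,y,z). F u x y z) (Us \<times> UNIV)
           (\<lambda>(u,x,y,z). z) (\<lambda>(u,x,y,z). (u,y)) (\<lambda>(u,x,y,z). x)"
  unfolding markov_chain_Z_UY_X_iff[OF assms(1)]
  by (simp add: factors sum_product[symmetric]
      sum_distrib_left[symmetric] sum_distrib_right[symmetric])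

lemma markov_chain_U_YZ_X_if_factorizes:
  fixes F :: "nat \<Rightarrow> 'x::finite \<Rightarrow> 'y::finite \<Rightarrow> 'z::finite \<Rightarrow> real"
  assumes "finite Us" and factors: "\<And>u x y z. u \<in> Us \<Longrightarrow> F u x y z = A x y z * B u y z"
  shows "markov_chain (\<lambda>(u,x,y,z). F u x y z) (Us \<times> UNIV)
           (\<lambda>(u,x,y,z). u) (\<lambda>(u,x,y,z). (y,z)) (\<lambda>(u,x,y,z). x)"
  unfolding markov_chain_U_YZ_X_iff[OF assms(1)]
  by (simp add: factors sum_product[symmetric]
      sum_distrib_left[symmetric] sum_distrib_right[symmetric])

section \<open>Necessity\<close>

locale secure_computation =
  fixes pXY :: "'x::finite \<Rightarrow> 'y::finite \<Rightarrow> real"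
    and W :: "'x \<Rightarrow> 'y \<Rightarrow> 'z::finite \<Rightarrow> real"
    and Us :: "nat set"
    and q :: "nat \<Rightarrow> 'x \<Rightarrow> 'y \<Rightarrow> 'z \<Rightarrow> real"
  assumes pXY_pos: "\<And>x y. 0 < pXY x y"
    and W_nonneg: "\<And>x y z. 0 \<le> W x y z"
    and W_sum: "\<And>x y. (\<Sum>z\<in>UNIV. W x y z) = 1"
    and finite_Us: "finite Us"
    and q_nonneg: "\<And>u x y z. 0 \<le> q u x y z"
    and q_sum: "\<And>x y z. (\<Sum>u\<in>Us. q u x y z) = 1"
    and markov_U_X_Y: "markov_chain (joint pXY W q) (Us \<times> UNIV)
          (\<lambda>(u,x,y,z). u) (\<lambda>(u,x,y,z). x) (\<lambda>(u,x,y,z). y)"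
    and markov_Z_UY_X: "markov_chain (joint pXY W q) (Us \<times> UNIV)
          (\<lambda>(u,x,y,z). z) (\<lambda>(u,x,y,z). (u,y)) (\<lambda>(u,x,y,z). x)"
    and markov_U_YZ_X: "markov_chain (joint pXY W q) (Us \<times> UNIV)
          (\<lambda>(u,x,y,z). u) (\<lambda>(u,x,y,z). (y,z)) (\<lambda>(u,x,y,z). x)"
begin

text \<open>\<open>pZU u x y z = p(z, u | x, y)\<close>, \<open>pU u x y = p(u | x, y)\<close> and \<open>pUYZ u y z = p(u, y, z)\<close>.\<close>

definition pZU :: "nat \<Rightarrow> 'x \<Rightarrow> 'y \<Rightarrow> 'z \<Rightarrow> real" where
  "pZU u x y z = W x y z * q u x y z"

definition pU :: "nat \<Rightarrow> 'x \<Rightarrow> 'y \<Rightarrow> real" where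
  "pU u x y = (\<Sum>z\<in>UNIV. pZU u x y z)"

definition pUYZ :: "nat \<Rightarrow> 'y \<Rightarrow> 'z \<Rightarrow> real" where
  "pUYZ u y z = (\<Sum>x\<in>UNIV. pXY x y * pZU u x y z)"

lemma joint_eq: "joint pXY W q = (\<lambda>(u,x,y,z). pXY x y * pZU u x y z)"
  by (simp add: joint_def pZU_def mult.assoc)

lemma pZU_nonneg: "0 \<le> pZU u x y z"
  by (simp add: pZU_def W_nonneg q_nonneg)

lemma pZU_le_pU: "pZU u x y z \<le> pU u x y"
  unfolding pU_def by (rule member_le_sum) (simp_all add: pZU_nonneg)

lemma sum_pZU: "(\<Sum>u\<in>Us. pZU u x y z) = W x y z"
  by (simp add: pZU_def q_sum sum_distrib_left[symmetric])

lemma sum_pU: "(\<Sum>u\<in>Us. pU u x y) = 1"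
  unfolding pU_def by (subst sum.swap) (simp add: sum_pZU W_sum)

lemma pU_indep_Y:
  assumes "u \<in> Us"
  shows "pU u x y = pU u x y'"
proof -
  have marg: "(\<Sum>z\<in>UNIV. pXY x y * pZU u x y z) = pXY x y * pU u x y" for u y
    by (simp add: pU_def sum_distrib_left)
  have marg_U: "(\<Sum>u\<in>Us. pXY x y * pU u x y) = pXY x y" for y
    by (simp add: sum_distrib_left[symmetric] sum_pU)
  define M where "M = (\<Sum>y\<in>UNIV. pXY x y * pU u x y)"
  define pX where "pX = (\<Sum>y\<in>UNIV. pXY x y)"
  have "pX > 0"
    unfolding pX_def using pXY_pos by (intro sum_pos) auto
  have total: "(\<Sum>u'\<in>Us. \<Sum>y'\<in>UNIV. pXY x y' * pU u' x y') = pX"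
    unfolding pX_def by (subst sum.swap) (simp only: marg_U)
  have "(\<Sum>z\<in>UNIV. pXY x c * pZU u x c z) * (\<Sum>u'\<in>Us. \<Sum>y'\<in>UNIV. \<Sum>z\<in>UNIV. pXY x y' * pZU u' x y' z)
      = (\<Sum>y'\<in>UNIV. \<Sum>z\<in>UNIV. pXY x y' * pZU u x y' z)
        * (\<Sum>u'\<in>Us. \<Sum>z\<in>UNIV. pXY x c * pZU u' x c z)" for c
    using markov_U_X_Y assms unfolding joint_eq markov_chain_U_X_Y_iff[OF finite_Us] by blast
  then have chain: "pXY x c * pU u x c * pX = M * pXY x c" for c
    unfolding marg total marg_U M_def[symmetric] .
  have "pU u x c = M / pX" for c
    using chain[of c] pXY_pos[of x c] \<open>pX > 0\<close> by (simp add: field_simps)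
  then show ?thesis
    by simp
qed

lemma pZU_mult_pUY:
  assumes "u \<in> Us"
  shows "pZU u x y z * (\<Sum>x'\<in>UNIV. pXY x' y * pU u x' y) = pUYZ u y z * pU u x y"
proof -
  have marg: "(\<Sum>z\<in>UNIV. pXY x y * pZU u x y z) = pXY x y * pU u x y" for x
    by (simp add: pU_def sum_distrib_left)
  have "pXY x y * pZU u x y z * (\<Sum>x'\<in>UNIV. \<Sum>z'\<in>UNIV. pXY x' y * pZU u x' y z')
      = (\<Sum>x'\<in>UNIV. pXY x' y * pZU u x' y z) * (\<Sum>z'\<in>UNIV. pXY x y * pZU u x y z')"
    using markov_Z_UY_X assms unfolding joint_eq markov_chain_Z_UY_X_iff[OF finite_Us] by blast
  then have "pXY x y * (pZU u x y z * (\<Sum>x'\<in>UNIV. pXY x' y * pU u x' y))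
      = pXY x y * (pUYZ u y z * pU u x y)"
    unfolding marg pUYZ_def[symmetric] by (simp add: ac_simps)
  then show ?thesis
    using pXY_pos[of x y] by simp
qed

lemma pZU_mult_pYZ:
  assumes "u \<in> Us"
  shows "pZU u x y z * (\<Sum>x'\<in>UNIV. pXY x' y * W x' y z) = pUYZ u y z * W x y z"
proof -
  have marg: "(\<Sum>u\<in>Us. pXY x y * pZU u x y z) = pXY x y * W x y z" for x
    by (simp add: sum_distrib_left[symmetric] sum_pZU)
  have total: "(\<Sum>u'\<in>Us. \<Sum>x'\<in>UNIV. pXY x' y * pZU u' x' y z) = (\<Sum>x'\<in>UNIV. pXY x' y * W x' y z)"
    by (subst sum.swap) (simp only: marg)
  have "pXY x y * pZU u x y z * (\<Sum>u'\<in>Us. \<Sum>x'\<in>UNIV. pXY x' y * pZU u' x' y z)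
      = (\<Sum>x'\<in>UNIV. pXY x' y * pZU u x' y z) * (\<Sum>u'\<in>Us. pXY x y * pZU u' x y z)"
    using markov_U_YZ_X assms unfolding joint_eq markov_chain_U_YZ_X_iff[OF finite_Us] by blast
  then have "pXY x y * (pZU u x y z * (\<Sum>x'\<in>UNIV. pXY x' y * W x' y z))
      = pXY x y * (pUYZ u y z * W x y z)"
    unfolding total unfolding marg pUYZ_def[symmetric] by (simp add: ac_simps)
  then show ?thesis
    using pXY_pos[of x y] by simp
qed

lemma pUYZ_nonneg: "0 \<le> pUYZ u y z"
  unfolding pUYZ_def using pXY_pos pZU_nonneg by (intro sum_nonneg) (simp add: less_imp_le)

lemma pZU_eq_0_if_pUYZ_eq_0:
  assumes "pUYZ u y z = 0"
  shows "pZU u x y z = 0"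
proof -
  have "\<forall>x\<in>UNIV. pXY x y * pZU u x y z = 0"
    using assms pXY_pos pZU_nonneg unfolding pUYZ_def
    by (subst sum_nonneg_eq_0_iff[symmetric]) (auto simp: less_imp_le)
  then have "pXY x y * pZU u x y z = 0"
    by blast
  then show ?thesis
    using pXY_pos[of x y] by simp
qed

text \<open>Z - (U,Y) - X makes \<open>p(z, u | \<cdot>, y)\<close> proportional to \<open>p(u | \<cdot>, y)\<close>, and U - (Y,Z) - X makes it
  proportional to \<open>p(z | \<cdot>, y)\<close>; so every u compatible with (y, z) determines the class of z.\<close>
lemma normalized_column_if_pUYZ_pos:
  assumes u: "u \<in> Us" and pos: "0 < pUYZ u y z"
  shows "z \<in> Zsupp W y \<and> normalized (\<lambda>x. W x y z) = normalized (\<lambda>x. pU u x y)"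
proof -
  define R D where "R = (\<Sum>x\<in>UNIV. pXY x y * pU u x y)" and "D = (\<Sum>x\<in>UNIV. pXY x y * W x y z)"
  have "\<exists>x0. 0 < pZU u x0 y z"
  proof (rule ccontr)
    assume "\<nexists>x0. 0 < pZU u x0 y z"
    then have "\<forall>x. pZU u x y z = 0"
      using pZU_nonneg by (simp add: not_less order_antisym)
    then show False
      using pos by (simp add: pUYZ_def)
  qed
  then obtain x0 where "0 < pZU u x0 y z" ..
  then have "0 < W x0 y z"
    using W_nonneg[of x0 y z] q_nonneg[of u x0 y z] by (auto simp: pZU_def zero_less_mult_iff)
  then have z: "z \<in> Zsupp W y" and "0 < D"
    unfolding Zsupp_def D_def using pXY_pos W_nonneg
    by (auto intro!: sum_pos2[of UNIV x0] simp: less_imp_le)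
  have "pUYZ u y z \<le> R"
    unfolding pUYZ_def R_def using pXY_pos pZU_le_pU
    by (intro sum_mono mult_left_mono) (auto simp: less_imp_le)
  with pos have "0 < R"
    by simp
  have scale: "W x y z = (D / R) * pU u x y" for x
  proof -
    have "W x y z * pUYZ u y z * R = D * (pZU u x y z * R)"
      using pZU_mult_pYZ[OF u, of x y z] by (simp add: D_def algebra_simps)
    also have "\<dots> = D * pU u x y * pUYZ u y z"
      using pZU_mult_pUY[OF u, of x y z] by (simp add: R_def algebra_simps)
    finally show ?thesis
      using pos \<open>0 < R\<close> by (simp add: field_simps)
  qed
  then have "normalized (\<lambda>x. W x y z) = normalized (\<lambda>x. pU u x y)"
    using \<open>0 < D\<close> \<open>0 < R\<close> by (intro normalized_scale[of _ "D / R"] scale) auto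
  with z show ?thesis
    by simp
qed

lemma class_mass_eq_sum_pU:
  "class_mass W y a x = (\<Sum>u\<in>Us. if normalized (\<lambda>x. pU u x y) = a then pU u x y else 0)"
proof -
  have class_sum: "(\<Sum>z\<in>column_class W y a. pZU u x y z)
      = (if normalized (\<lambda>x. pU u x y) = a then pU u x y else 0)" if u: "u \<in> Us" for u
  proof -
    have "(\<Sum>z\<in>column_class W y a. pZU u x y z)
        = (\<Sum>z\<in>UNIV. if z \<in> column_class W y a then pZU u x y z else 0)"
      by (simp add: sum.inter_restrict[symmetric])
    also have "\<dots> = (\<Sum>z\<in>UNIV. if normalized (\<lambda>x. pU u x y) = a then pZU u x y z else 0)"
    proof (rule sum.cong)
      fix z
      show "(if z \<in> column_class W y a then pZU u x y z else 0)
          = (if normalized (\<lambda>x. pU u x y) = a then pZU u x y z else 0)"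
      proof (cases "pUYZ u y z = 0")
        case True
        then show ?thesis
          by (simp add: pZU_eq_0_if_pUYZ_eq_0)
      next
        case False
        then have "0 < pUYZ u y z"
          using pUYZ_nonneg[of u y z] by simp
        then show ?thesis
          using normalized_column_if_pUYZ_pos[OF u] by (auto simp: column_class_def)
      qed
    qed simp
    finally show ?thesis
      by (simp add: pU_def)
  qed
  have "class_mass W y a x = (\<Sum>z\<in>column_class W y a. \<Sum>u\<in>Us. pZU u x y z)"
    by (simp add: class_mass_def sum_pZU)
  also have "\<dots> = (\<Sum>u\<in>Us. \<Sum>z\<in>column_class W y a. pZU u x y z)"
    by (rule sum.swap)
  also have "\<dots> = (\<Sum>u\<in>Us. if normalized (\<lambda>x. pU u x y) = a then pU u x y else 0)"
    by (rule sum.cong) (simp_all add: class_sum)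
  finally show ?thesis .
qed

lemma class_mass_indep_Y: "class_mass W y = class_mass W y'"
proof (intro ext)
  fix a x
  have "(if normalized (\<lambda>x. pU u x y) = a then pU u x y else 0)
      = (if normalized (\<lambda>x. pU u x y') = a then pU u x y' else 0)" if u: "u \<in> Us" for u
  proof -
    have "(\<lambda>x. pU u x y) = (\<lambda>x. pU u x y')"
      using pU_indep_Y[OF u] by blast
    then show ?thesis
      by (simp add: pU_indep_Y[OF u, of x y y'])
  qed
  then show "class_mass W y a x = class_mass W y' a x"
    unfolding class_mass_eq_sum_pU by (rule sum.cong[OF refl])
qed

end

lemma class_mass_indep_if_perfectly_secure:
  fixes pXY :: "'x::finite \<Rightarrow> 'y::finite \<Rightarrow> real"
    and W :: "'x \<Rightarrow> 'y \<Rightarrow> 'z::finite \<Rightarrow> real"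
  assumes "\<And>x y. 0 < pXY x y"
    and "\<And>x y z. 0 \<le> W x y z"
    and "\<And>x y. (\<Sum>z\<in>UNIV. W x y z) = 1"
    and "perfectly_secure_computable pXY W"
  shows "class_mass W y = class_mass W y'"
proof -
  obtain Us q where "finite Us" "\<forall>u x y z. 0 \<le> q u x y z" "\<forall>x y z. (\<Sum>u\<in>Us. q u x y z) = 1"
    and "markov_chain (joint pXY W q) (Us \<times> UNIV)
      (\<lambda>(u,x,y,z). u) (\<lambda>(u,x,y,z). x) (\<lambda>(u,x,y,z). y)"
    and "markov_chain (joint pXY W q) (Us \<times> UNIV)
      (\<lambda>(u,x,y,z). z) (\<lambda>(u,x,y,z). (u,y)) (\<lambda>(u,x,y,z). x)"
    and "markov_chain (joint pXY W q) (Us \<times> UNIV)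
      (\<lambda>(u,x,y,z). u) (\<lambda>(u,x,y,z). (y,z)) (\<lambda>(u,x,y,z). x)"
    using assms(4) unfolding perfectly_secure_computable_def Let_def by blast
  then have "secure_computation pXY W Us q"
    using assms(1-3) by (simp add: secure_computation_def)
  then show ?thesis
    by (rule secure_computation.class_mass_indep_Y)
qed

section \<open>Sufficiency\<close>

text \<open>The protocol: U reveals the class of Z, through a label \<open>g y z\<close> from which the
  class vector \<open>a (g y z)\<close> can be read off.\<close>
lemma perfectly_secure_if_class_labelling:
  fixes pXY :: "'x::finite \<Rightarrow> 'y::finite \<Rightarrow> real"
    and W :: "'x \<Rightarrow> 'y \<Rightarrow> 'z::finite \<Rightarrow> real"
    and g :: "'y \<Rightarrow> 'z \<Rightarrow> nat" and a :: "nat \<Rightarrow> 'x \<Rightarrow> real"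
  assumes W_nonneg: "\<And>x y z. 0 \<le> W x y z"
    and mass: "\<And>y y'. class_mass W y = class_mass W y'"
    and finite_Us: "finite Us"
    and label_in_Us: "\<And>y z. g y z \<in> Us"
    and label_eq_iff: "\<And>u y z. u \<in> Us \<Longrightarrow> g y z = u \<longleftrightarrow> normalized (\<lambda>x. W x y z) = a u"
  shows "perfectly_secure_computable pXY W"
proof -
  define q :: "nat \<Rightarrow> 'x \<Rightarrow> 'y \<Rightarrow> 'z \<Rightarrow> real"
    where "q u x y z = (if g y z = u then 1 else 0)" for u x y z
  have "markov_chain (joint pXY W q) (Us \<times> UNIV)
      (\<lambda>(u,x,y,z). u) (\<lambda>(u,x,y,z). x) (\<lambda>(u,x,y,z). y)"
  proof -
    have "(\<Sum>z\<in>UNIV. pXY x y * W x y z * q u x y z) = class_mass W undefined (a u) x * pXY x y"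
      if u: "u \<in> Us" for u x y
    proof -
      have "(\<Sum>z\<in>UNIV. W x y z * q u x y z)
          = (\<Sum>z\<in>UNIV. if normalized (\<lambda>x. W x y z) = a u then W x y z else 0)"
        by (intro sum.cong) (simp_all add: q_def label_eq_iff[OF u])
      also have "\<dots> = class_mass W undefined (a u) x"
        using class_mass_eq_sum_if[where W = W and y = y and a = "a u" and x = x, OF W_nonneg]
          mass[of y undefined] by simp
      finally show ?thesis
        by (simp add: sum_distrib_left[symmetric] mult.assoc)
    qed
    then show ?thesis
      unfolding joint_def by (rule markov_chain_U_X_Y_if_factorizes[OF finite_Us])
  qed
  moreover have "markov_chain (joint pXY W q) (Us \<times> UNIV)
      (\<lambda>(u,x,y,z). z) (\<lambda>(u,x,y,z). (u,y)) (\<lambda>(u,x,y,z). x)"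
  proof -
    have "pXY x y * W x y z * q u x y z
        = (pXY x y * a u x) * ((\<Sum>x\<in>UNIV. W x y z) * q u undefined y z)" if u: "u \<in> Us" for u x y z
      using column_eq_normalized_mult_sum[where W = W and x = x and y = y and z = z, OF W_nonneg]
      by (auto simp: q_def label_eq_iff[OF u])
    then show ?thesis
      unfolding joint_def
      by (rule markov_chain_Z_UY_X_if_factorizes[OF finite_Us, where A = "\<lambda>u x y. pXY x y * a u x"
            and B = "\<lambda>u y z. (\<Sum>x\<in>UNIV. W x y z) * q u undefined y z"])
  qed
  moreover have "markov_chain (joint pXY W q) (Us \<times> UNIV)
      (\<lambda>(u,x,y,z). u) (\<lambda>(u,x,y,z). (y,z)) (\<lambda>(u,x,y,z). x)"
    unfolding joint_def
    by (rule markov_chain_U_YZ_X_if_factorizes[OF finite_Us,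
          where A = "\<lambda>x y z. pXY x y * W x y z" and B = "\<lambda>u y z. q u undefined y z"])
      (simp add: q_def)
  moreover have "\<forall>u x y z. 0 \<le> q u x y z" "\<forall>x y z. (\<Sum>u\<in>Us. q u x y z) = 1"
    using label_in_Us finite_Us by (simp_all add: q_def sum.delta)
  ultimately show ?thesis
    unfolding perfectly_secure_computable_def Let_def using finite_Us by blast
qed

lemma perfectly_secure_if_class_mass_indep:
  fixes pXY :: "'x::finite \<Rightarrow> 'y::finite \<Rightarrow> real"
    and W :: "'x \<Rightarrow> 'y \<Rightarrow> 'z::finite \<Rightarrow> real"
  assumes W_nonneg: "\<And>x y z. 0 \<le> W x y z"
    and mass: "\<And>y y'. class_mass W y = class_mass W y'"
  shows "perfectly_secure_computable pXY W"
proof -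
  define P where "P = range (\<lambda>(y, z). normalized (\<lambda>x. W x y z))"
  obtain f :: "('x \<Rightarrow> real) \<Rightarrow> nat" where f: "inj_on f P"
    using finite_imp_inj_to_nat_seg[of P] by (auto simp: P_def)
  have profile_in_P: "normalized (\<lambda>x. W x y z) \<in> P" for y z
    unfolding P_def by (intro image_eqI[where x = "(y, z)"]) simp_all
  show ?thesis
  proof (rule perfectly_secure_if_class_labelling[OF W_nonneg mass])
    show "finite (f ` P)"
      by (simp add: P_def)
    show "f (normalized (\<lambda>x. W x y z)) \<in> f ` P" for y z
      using profile_in_P by simp
    show "f (normalized (\<lambda>x. W x y z)) = u \<longleftrightarrow> normalized (\<lambda>x. W x y z) = the_inv_into P f u"
      if "u \<in> f ` P" for u y z
      using that f profile_in_P[of y z] by (auto simp: the_inv_into_f_f inj_on_eq_iff)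
  qed
qed

theorem theorem3:
  fixes pXY :: "'x::finite \<Rightarrow> 'y::finite \<Rightarrow> real"
    and W :: "'x \<Rightarrow> 'y \<Rightarrow> 'z::finite \<Rightarrow> real"
  assumes full_support: "\<forall>x y. pXY x y > 0"
    and pXY_sum: "(\<Sum>x\<in>UNIV. \<Sum>y\<in>UNIV. pXY x y) = 1"
    and W_nonneg: "\<forall>x y z. 0 \<le> W x y z"
    and W_sum: "\<forall>x y. (\<Sum>z\<in>UNIV. W x y z) = 1"
  shows "perfectly_secure_computable pXY W \<longleftrightarrow>
    (\<forall>y y'. kcl W y = kcl W y' \<and>
            alpha W y ` zclasses W y = alpha W y' ` zclasses W y' \<and>
            (\<forall>C\<in>zclasses W y. \<forall>C'\<in>zclasses W y'. alpha W y C = alpha W y' C' \<longrightarrow>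
               (\<forall>x. (\<Sum>z\<in>C. W x y z) = (\<Sum>z\<in>C'. W x y' z))))"
proof -
  have nonneg: "0 \<le> W x y z" for x y z
    using W_nonneg by blast
  have "perfectly_secure_computable pXY W \<longleftrightarrow> (\<forall>y y'. class_mass W y = class_mass W y')"
  proof
    assume "perfectly_secure_computable pXY W"
    then show "\<forall>y y'. class_mass W y = class_mass W y'"
      using class_mass_indep_if_perfectly_secure[of pXY W] full_support nonneg W_sum by blast
  next
    assume "\<forall>y y'. class_mass W y = class_mass W y'"
    then show "perfectly_secure_computable pXY W"
      using perfectly_secure_if_class_mass_indep[of W pXY] nonneg by blast
  qed
  then show ?thesis
    unfolding class_conditions_iff_class_mass_const[where W = W, OF nonneg] .
qed

end
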